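(* Let $B$ be a BDD and let $B^r$ be the reduced BDD for the same variable ordering with $X_{B^r}=X_B$ (so $|N^r_i|\le|N_i|$ for each layer $i$). Then the projection of $\mathcal{F}^{cap}(B^r)$ onto the $x$-variables is contained in the projection of $\mathcal{F}^{cap}(B)$ onto the $x$-variables.
   Context: A binary decision diagram (BDD) $B=(N,A)$ is a directed acyclic multigraph whose node set is partitioned into layers $N_1,\dots,N_{n+1}$ with $N_1=\{r\}$, $N_{n+1}=\{t\}$; every arc $a$ goes from $s(a)\in N_i$ to $t(a)\in N_{i+1}$ for some $i\in I=\{1,\dots,n\}$ and has label $v_a\in\{0,1\}$, each node having at most one outgoing arc of each label; layer $i$ corresponds to variable $x_i$. $X_B\subseteq\{0,1\}^n$ is the set of label vectors of $r$–$t$ paths. A BDD is reduced if it has the minimum number of nodes among all BDDs (with this layer/variable ordering) representing the same set; it is unique and obtained from any BDD for the set by merging equivalent nodes. $\mathcal{F}^{cap}(B)$ is the set of $(x,y)\in[0,1]^n\times\mathbb{R}^{|A|}_{\ge0}$ satisfying flow conservation $\sum_{a\in\delta^+(u)}y_a=\sum_{a\in\delta^-(u)}y_a$ for $u\in N\setminus\{r,t\}$, $\sum_{a\in\delta^+(r)}y_a=\sum_{a\in\delta^-(t)}y_a=1$, $y_a\le x_i$ for every arc $a$ with $s(a)\in N_i$, $v_a=1$, and $y_a\le1-x_i$ for every arc $a$ with $s(a)\in N_i$, $v_a=0$. *)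

theory Defs
  imports Complex_Main
begin

text \<open>A BDD with node type 'v and arc type 'a (arcs are objects, so parallel arcs are allowed).
  Layer i (1 \<le> i \<le> n) corresponds to variable x_i; bdd_layer assigns each node its layer.\<close>

record ('v, 'a) bdd =
  bdd_n     :: nat
  bdd_N     :: "'v set"
  bdd_A     :: "'a set"
  bdd_layer :: "'v \<Rightarrow> nat"
  bdd_src   :: "'a \<Rightarrow> 'v"
  bdd_tgt   :: "'a \<Rightarrow> 'v"
  bdd_label :: "'a \<Rightarrow> bool"
  bdd_root  :: 'v
  bdd_term  :: 'v

definition is_bdd :: "('v, 'a) bdd \<Rightarrow> bool" where
  "is_bdd B \<longleftrightarrow>
     finite (bdd_N B) \<and> finite (bdd_A B) \<and>
     (\<forall>u\<in>bdd_N B. bdd_layer B u \<in> {1..bdd_n B + 1}) \<and>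
     {u\<in>bdd_N B. bdd_layer B u = 1} = {bdd_root B} \<and>
     {u\<in>bdd_N B. bdd_layer B u = bdd_n B + 1} = {bdd_term B} \<and>
     (\<forall>a\<in>bdd_A B. bdd_src B a \<in> bdd_N B \<and> bdd_tgt B a \<in> bdd_N B \<and>
        bdd_layer B (bdd_src B a) \<in> {1..bdd_n B} \<and>
        bdd_layer B (bdd_tgt B a) = bdd_layer B (bdd_src B a) + 1) \<and>
     (\<forall>a\<in>bdd_A B. \<forall>b\<in>bdd_A B.
        bdd_src B a = bdd_src B b \<and> bdd_label B a = bdd_label B b \<longrightarrow> a = b)"

fun bdd_path :: "('v, 'a) bdd \<Rightarrow> 'v \<Rightarrow> 'v \<Rightarrow> 'a list \<Rightarrow> bool" where
  "bdd_path B u v [] \<longleftrightarrow> u = v"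
| "bdd_path B u v (a # p) \<longleftrightarrow>
     a \<in> bdd_A B \<and> bdd_src B a = u \<and> bdd_path B (bdd_tgt B a) v p"

text \<open>X_B: label vectors of root-terminal paths; list entry k (0-based) is the value of x_(k+1).\<close>
definition bdd_X :: "('v, 'a) bdd \<Rightarrow> bool list set" where
  "bdd_X B = {map (bdd_label B) p | p. bdd_path B (bdd_root B) (bdd_term B) p}"

text \<open>Reduced: minimum number of nodes among all BDDs with the same number of layers
  (same variable ordering) representing the same set.  Every finite BDD is isomorphic to
  one with nat nodes and nat arcs, so quantifying over those is quantifying over all BDDs.\<close>
definition is_reduced_bdd :: "('v, 'a) bdd \<Rightarrow> bool" where
  "is_reduced_bdd B \<longleftrightarrow> is_bdd B \<and>
     (\<forall>B' :: (nat, nat) bdd. is_bdd B' \<and> bdd_n B' = bdd_n B \<and> bdd_X B' = bdd_X B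
        \<longrightarrow> card (bdd_N B) \<le> card (bdd_N B'))"

definition out_arcs :: "('v, 'a) bdd \<Rightarrow> 'v \<Rightarrow> 'a set" where
  "out_arcs B u = {a\<in>bdd_A B. bdd_src B a = u}"

definition in_arcs :: "('v, 'a) bdd \<Rightarrow> 'v \<Rightarrow> 'a set" where
  "in_arcs B u = {a\<in>bdd_A B. bdd_tgt B a = u}"

text \<open>F^cap(B): x indexed by 1..n (other coordinates unconstrained), y indexed by arcs.\<close>
definition Fcap :: "('v, 'a) bdd \<Rightarrow> ((nat \<Rightarrow> real) \<times> ('a \<Rightarrow> real)) set" where
  "Fcap B = {(x, y).
     (\<forall>i\<in>{1..bdd_n B}. 0 \<le> x i \<and> x i \<le> 1) \<and>
     (\<forall>a\<in>bdd_A B. 0 \<le> y a) \<and>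
     (\<forall>u\<in>bdd_N B - {bdd_root B, bdd_term B}.
        (\<Sum>a\<in>out_arcs B u. y a) = (\<Sum>a\<in>in_arcs B u. y a)) \<and>
     (\<Sum>a\<in>out_arcs B (bdd_root B). y a) = 1 \<and>
     (\<Sum>a\<in>in_arcs B (bdd_term B). y a) = 1 \<and>
     (\<forall>a\<in>bdd_A B. bdd_label B a \<longrightarrow> y a \<le> x (bdd_layer B (bdd_src B a))) \<and>
     (\<forall>a\<in>bdd_A B. \<not> bdd_label B a \<longrightarrow> y a \<le> 1 - x (bdd_layer B (bdd_src B a)))}"

definition proj_x :: "('v, 'a) bdd \<Rightarrow> (nat \<Rightarrow> real) set" where
  "proj_x B = {x. \<exists>y. (x, y) \<in> Fcap B}"

end

theory Submission
  imports Defs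
begin

text \<open>Every node u of B that lies on a root-terminal path is sent to the node of the reduced
  BDD in the same layer with the same language of completions.  This node exists and is unique
  because the reduced BDD has one node per pair (layer, residual language) and all its nodes lie
  on root-terminal paths; for the same reason the out-arcs of u correspond bijectively to the
  out-arcs of its image.  A flow y on the reduced BDD is lifted to B by letting the flow arriving
  at u leave along its out-arcs in the proportions in which y leaves the image of u.  Layer by
  layer, the flow arriving at the preimage of a node w equals the flow through w, so the lifted
  flow is a unit flow and each arc carries at most the flow of its image arc; hence the same x
  satisfies the capacity constraints of B.  If X is empty there is no unit flow at all, since
  the support of a unit flow contains a root-terminal path.\<close>

section \<open>Paths and suffix languages\<close>

lemma bdd_path_append:
  "bdd_path B u v (p @ q) \<longleftrightarrow> (\<exists>w. bdd_path B u w p \<and> bdd_path B w v q)"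
  by (induction p arbitrary: u) auto

lemma bdd_path_arcs: "bdd_path B u v p \<Longrightarrow> set p \<subseteq> bdd_A B"
  by (induction p arbitrary: u) auto

lemma bdd_path_split_labels:
  assumes "bdd_path B u v P" "map (bdd_label B) P = s @ t"
  obtains w P1 P2 where "bdd_path B u w P1" "bdd_path B w v P2"
    "map (bdd_label B) P1 = s" "map (bdd_label B) P2 = t"
proof -
  obtain P1 P2 where "P = P1 @ P2" "map (bdd_label B) P1 = s" "map (bdd_label B) P2 = t"
    using assms(2) by (metis map_eq_append_conv)
  with assms(1) show ?thesis using that by (auto simp: bdd_path_append)
qed

definition suffixes :: "('v, 'a) bdd \<Rightarrow> 'v \<Rightarrow> bool list set" where
  "suffixes B u = {map (bdd_label B) p | p. bdd_path B u (bdd_term B) p}"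

definition useful :: "('v, 'a) bdd \<Rightarrow> 'v \<Rightarrow> bool" where
  "useful B u \<longleftrightarrow> (\<exists>p q. bdd_path B (bdd_root B) u p \<and> bdd_path B u (bdd_term B) q)"

definition residual :: "bool list set \<Rightarrow> bool list \<Rightarrow> bool list set" where
  "residual L p = {t. p @ t \<in> L}"

lemma residual_append [simp]: "residual (residual L p) q = residual L (p @ q)"
  unfolding residual_def by simp

lemma useful_suffixes_nonempty: "useful B u \<Longrightarrow> suffixes B u \<noteq> {}"
  unfolding useful_def suffixes_def by auto

locale bdd =
  fixes B :: "('v, 'a) bdd"
  assumes wf: "is_bdd B"
begin

lemma finite_nodes: "finite (bdd_N B)"
  and finite_arcs: "finite (bdd_A B)"
  and root_in_nodes: "bdd_root B \<in> bdd_N B"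
  and layer_root: "bdd_layer B (bdd_root B) = 1"
  and term_in_nodes: "bdd_term B \<in> bdd_N B"
  and layer_term: "bdd_layer B (bdd_term B) = bdd_n B + 1"
  using wf unfolding is_bdd_def by (auto simp: set_eq_iff)

lemma layer_bounds: "u \<in> bdd_N B \<Longrightarrow> bdd_layer B u \<in> {1..bdd_n B + 1}"
  and root_if_layer_one: "u \<in> bdd_N B \<Longrightarrow> bdd_layer B u = 1 \<Longrightarrow> u = bdd_root B"
  and term_if_layer_last: "u \<in> bdd_N B \<Longrightarrow> bdd_layer B u = bdd_n B + 1 \<Longrightarrow> u = bdd_term B"
  using wf unfolding is_bdd_def by (auto simp: set_eq_iff)

lemma src_in_nodes: "a \<in> bdd_A B \<Longrightarrow> bdd_src B a \<in> bdd_N B"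
  and tgt_in_nodes: "a \<in> bdd_A B \<Longrightarrow> bdd_tgt B a \<in> bdd_N B"
  and src_layer_bounds: "a \<in> bdd_A B \<Longrightarrow> bdd_layer B (bdd_src B a) \<in> {1..bdd_n B}"
  and tgt_layer: "a \<in> bdd_A B \<Longrightarrow> bdd_layer B (bdd_tgt B a) = bdd_layer B (bdd_src B a) + 1"
  using wf unfolding is_bdd_def by auto

lemma arc_eqI:
  "\<lbrakk>a \<in> bdd_A B; b \<in> bdd_A B; bdd_src B a = bdd_src B b; bdd_label B a = bdd_label B b\<rbrakk> \<Longrightarrow> a = b"
  using wf unfolding is_bdd_def by blast

lemma finite_out_arcs: "finite (out_arcs B u)"
  and finite_in_arcs: "finite (in_arcs B u)"
  unfolding out_arcs_def in_arcs_def using finite_arcs by simp_all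

lemma path_deterministic:
  "\<lbrakk>bdd_path B u v p; bdd_path B u v' p'; map (bdd_label B) p = map (bdd_label B) p'\<rbrakk>
   \<Longrightarrow> p = p' \<and> v = v'"
proof (induction p arbitrary: u p')
  case (Cons a p)
  then obtain a' q where "p' = a' # q" by (cases p') auto
  with Cons arc_eqI[of a a'] show ?case by auto
qed auto

lemma path_layer:
  "\<lbrakk>u \<in> bdd_N B; bdd_path B u v p\<rbrakk> \<Longrightarrow> v \<in> bdd_N B \<and> bdd_layer B v = bdd_layer B u + length p"
proof (induction p arbitrary: u)
  case (Cons a p)
  then have "bdd_tgt B a \<in> bdd_N B" "bdd_layer B (bdd_tgt B a) = bdd_layer B u + 1"
    using tgt_in_nodes tgt_layer by auto
  with Cons show ?case by auto
qed simp

lemma root_path_layer: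
  "bdd_path B (bdd_root B) v p \<Longrightarrow> v \<in> bdd_N B \<and> bdd_layer B v = length p + 1"
  using path_layer[OF root_in_nodes] layer_root by auto

lemma useful_in_nodes: "useful B u \<Longrightarrow> u \<in> bdd_N B"
  unfolding useful_def using root_path_layer by blast

lemma length_if_in_X: "s \<in> bdd_X B \<Longrightarrow> length s = bdd_n B"
  unfolding bdd_X_def using root_path_layer layer_term by auto

lemma finite_X: "finite (bdd_X B)"
proof (rule finite_subset)
  show "bdd_X B \<subseteq> {s. set s \<subseteq> UNIV \<and> length s = bdd_n B}"
    using length_if_in_X by auto
qed (rule finite_lists_length_eq, simp)

lemma suffixes_eq_residual:
  assumes p: "bdd_path B (bdd_root B) u p"
  shows "suffixes B u = residual (bdd_X B) (map (bdd_label B) p)"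
proof (intro set_eqI iffI)
  fix t assume "t \<in> suffixes B u"
  then obtain q where q: "bdd_path B u (bdd_term B) q" "t = map (bdd_label B) q"
    unfolding suffixes_def by auto
  with p have "bdd_path B (bdd_root B) (bdd_term B) (p @ q)"
    by (auto simp: bdd_path_append)
  then have "map (bdd_label B) p @ t \<in> bdd_X B"
    unfolding bdd_X_def q(2) by (metis (mono_tags, lifting) map_append mem_Collect_eq)
  then show "t \<in> residual (bdd_X B) (map (bdd_label B) p)"
    unfolding residual_def by simp
next
  fix t assume "t \<in> residual (bdd_X B) (map (bdd_label B) p)"
  then obtain P where "bdd_path B (bdd_root B) (bdd_term B) P"
    and "map (bdd_label B) P = map (bdd_label B) p @ t"
    unfolding residual_def bdd_X_def by auto
  then obtain w P1 P2 where "bdd_path B (bdd_root B) w P1" "bdd_path B w (bdd_term B) P2"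
    "map (bdd_label B) P1 = map (bdd_label B) p" "map (bdd_label B) P2 = t"
    by (rule bdd_path_split_labels)
  with path_deterministic[OF _ p] show "t \<in> suffixes B u"
    unfolding suffixes_def by blast
qed

lemma prefix_node:
  assumes "s @ t \<in> bdd_X B"
  obtains w where "w \<in> bdd_N B" "useful B w" "bdd_layer B w = length s + 1"
    "suffixes B w = residual (bdd_X B) s"
proof -
  obtain P where "bdd_path B (bdd_root B) (bdd_term B) P" "map (bdd_label B) P = s @ t"
    using assms unfolding bdd_X_def by auto
  then obtain w P1 P2 where P1: "bdd_path B (bdd_root B) w P1" and P2: "bdd_path B w (bdd_term B) P2"
    and labels: "map (bdd_label B) P1 = s"
    by (rule bdd_path_split_labels)
  have "useful B w" using P1 P2 unfolding useful_def by blast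
  with root_path_layer[OF P1] suffixes_eq_residual[OF P1] labels that show ?thesis by auto
qed

lemma suffixes_tgt:
  assumes a: "a \<in> bdd_A B"
  shows "suffixes B (bdd_tgt B a) = residual (suffixes B (bdd_src B a)) [bdd_label B a]"
proof (intro set_eqI iffI)
  fix t assume "t \<in> residual (suffixes B (bdd_src B a)) [bdd_label B a]"
  then have "\<exists>P. bdd_path B (bdd_src B a) (bdd_term B) P \<and> bdd_label B a # t = map (bdd_label B) P"
    unfolding residual_def suffixes_def by auto
  then obtain P where P: "bdd_path B (bdd_src B a) (bdd_term B) P"
    and labels: "bdd_label B a # t = map (bdd_label B) P"
    by metis
  then obtain b Q where "P = b # Q" by (cases P) auto
  with P labels arc_eqI[OF a, of b] show "t \<in> suffixes B (bdd_tgt B a)"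
    unfolding suffixes_def by auto
next
  fix t assume "t \<in> suffixes B (bdd_tgt B a)"
  then obtain Q where "bdd_path B (bdd_tgt B a) (bdd_term B) Q" "t = map (bdd_label B) Q"
    unfolding suffixes_def by auto
  with a have "bdd_label B a # t \<in> suffixes B (bdd_src B a)"
    unfolding suffixes_def by (intro CollectI exI[of _ "a # Q"]) simp
  then show "t \<in> residual (suffixes B (bdd_src B a)) [bdd_label B a]"
    unfolding residual_def by simp
qed

end

section \<open>The residual BDD\<close>

lemma bdd_X_eq_suffixes_root: "bdd_X B = suffixes B (bdd_root B)"
  unfolding bdd_X_def suffixes_def ..

definition residual_nodes :: "bool list set \<Rightarrow> (nat \<times> bool list set) set" where
  "residual_nodes X = {(length p, residual X p) | p. residual X p \<noteq> {}}"

definition residual_bdd :: "nat \<Rightarrow> bool list set \<Rightarrow> (nat \<times> bool list set, (nat \<times> bool list set) \<times> bool) bdd" where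
  "residual_bdd n X = \<lparr>bdd_n = n, bdd_N = residual_nodes X,
     bdd_A = {(v, b). v \<in> residual_nodes X \<and> residual (snd v) [b] \<noteq> {}},
     bdd_layer = \<lambda>v. fst v + 1, bdd_src = fst, bdd_tgt = \<lambda>(v, b). (fst v + 1, residual (snd v) [b]),
     bdd_label = snd, bdd_root = (0, X), bdd_term = (n, {[]})\<rparr>"

lemma residual_nodes_step:
  "\<lbrakk>(k, S) \<in> residual_nodes X; residual S [b] \<noteq> {}\<rbrakk> \<Longrightarrow> (k + 1, residual S [b]) \<in> residual_nodes X"
proof -
  assume node: "(k, S) \<in> residual_nodes X" and b: "residual S [b] \<noteq> {}"
  from node obtain p where "k = length p" "S = residual X p"
    unfolding residual_nodes_def by blast
  with b show ?thesis
    unfolding residual_nodes_def by (intro CollectI exI[of _ "p @ [b]"]) simp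
qed

context
  fixes n :: nat and X :: "bool list set"
  assumes X_length: "\<forall>x\<in>X. length x = n"
begin

lemma finite_residual_nodes:
  assumes "finite X"
  shows "finite (residual_nodes X)"
proof (rule finite_subset)
  show "residual_nodes X \<subseteq> (\<lambda>(x, k). (k, residual X (take k x))) ` (X \<times> {..n})"
  proof
    fix v assume "v \<in> residual_nodes X"
    then obtain p t where v: "v = (length p, residual X p)" and "p @ t \<in> X"
      unfolding residual_nodes_def residual_def by auto
    with X_length show "v \<in> (\<lambda>(x, k). (k, residual X (take k x))) ` (X \<times> {..n})"
      by (force intro: image_eqI[of _ _ "(p @ t, length p)"])
  qed
qed (use assms in simp)

lemma residual_nodes_length:
  "\<lbrakk>(k, S) \<in> residual_nodes X; t \<in> S\<rbrakk> \<Longrightarrow> k + length t = n"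
  using X_length unfolding residual_nodes_def residual_def by force

lemma residual_nodes_last:
  assumes "(n, S) \<in> residual_nodes X"
  shows "S = {[]}"
proof -
  have "S \<noteq> {}" using assms unfolding residual_nodes_def by auto
  with residual_nodes_length[OF assms] show ?thesis by auto
qed

lemma suffixes_residual_bdd:
  assumes "(k, S) \<in> residual_nodes X"
  shows "suffixes (residual_bdd n X) (k, S) = S"
proof (intro set_eqI iffI)
  fix t assume "t \<in> suffixes (residual_bdd n X) (k, S)"
  then obtain q where "bdd_path (residual_bdd n X) (k, S) (n, {[]}) q" "t = map snd q"
    unfolding suffixes_def by (auto simp: residual_bdd_def)
  with assms show "t \<in> S"
  proof (induction q arbitrary: k S t)
    case (Cons a q)
    then obtain b where a: "a = ((k, S), b)" "residual S [b] \<noteq> {}"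
      and q: "bdd_path (residual_bdd n X) (k + 1, residual S [b]) (n, {[]}) q"
      by (cases a) (auto simp: residual_bdd_def)
    have "map snd q \<in> residual S [b]"
      using Cons.IH[OF residual_nodes_step[OF Cons.prems(1) a(2)] q] by simp
    with Cons.prems(3) a show ?case by (simp add: residual_def)
  qed (auto dest: residual_nodes_last)
next
  fix t assume "t \<in> S"
  with assms have "\<exists>q. bdd_path (residual_bdd n X) (k, S) (n, {[]}) q \<and> map snd q = t"
  proof (induction t arbitrary: k S)
    case Nil
    then have "k = n" using residual_nodes_length by force
    with Nil residual_nodes_last show ?case by auto
  next
    case (Cons b t)
    then have b: "t \<in> residual S [b]" by (simp add: residual_def)
    obtain q where "bdd_path (residual_bdd n X) (k + 1, residual S [b]) (n, {[]}) q" "map snd q = t"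
      using Cons.IH[OF residual_nodes_step[OF Cons.prems(1)] b] b by blast
    with Cons.prems(1) b show ?case
      by (intro exI[of _ "((k, S), b) # q"]) (auto simp: residual_bdd_def)
  qed
  then show "t \<in> suffixes (residual_bdd n X) (k, S)"
    unfolding suffixes_def by (auto simp: residual_bdd_def)
qed

lemma residual_nodes_root: "X \<noteq> {} \<Longrightarrow> (0, X) \<in> residual_nodes X"
  unfolding residual_nodes_def residual_def by (intro CollectI exI[of _ "[]"]) auto

lemma residual_nodes_term:
  assumes "X \<noteq> {}"
  shows "(n, {[]}) \<in> residual_nodes X"
proof -
  obtain x where x: "x \<in> X" using assms by auto
  moreover have "t = []" if "x @ t \<in> X" for t
    using X_length x that by (metis add_cancel_left_right length_0_conv length_append)
  ultimately have "residual X x = {[]}"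
    unfolding residual_def by auto
  with x X_length show ?thesis
    unfolding residual_nodes_def by (intro CollectI exI[of _ x]) simp
qed

lemma residual_nodes_layer_le:
  assumes "(k, S) \<in> residual_nodes X"
  shows "k \<le> n"
proof -
  have "S \<noteq> {}" using assms unfolding residual_nodes_def by auto
  then obtain t where "t \<in> S" by auto
  with residual_nodes_length[OF assms] show ?thesis by fastforce
qed

lemma residual_nodes_layer_less:
  assumes "(k, S) \<in> residual_nodes X" "residual S [b] \<noteq> {}"
  shows "k < n"
proof -
  obtain t where "b # t \<in> S" using assms(2) unfolding residual_def by auto
  with residual_nodes_length[OF assms(1)] show ?thesis by fastforce
qed

lemma bdd_X_residual_bdd: "X \<noteq> {} \<Longrightarrow> bdd_X (residual_bdd n X) = X"
  using suffixes_residual_bdd[OF residual_nodes_root]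
  by (simp add: bdd_X_eq_suffixes_root residual_bdd_def)

lemma is_bdd_residual_bdd:
  assumes "finite X" "X \<noteq> {}"
  shows "is_bdd (residual_bdd n X)"
proof -
  let ?A = "{(v, b). v \<in> residual_nodes X \<and> residual (snd v) [b] \<noteq> {}}"
  have finite_A: "finite ?A"
    by (rule finite_subset[of _ "residual_nodes X \<times> UNIV"])
      (use finite_residual_nodes[OF assms(1)] in auto)
  have layers: "\<forall>v\<in>residual_nodes X. fst v + 1 \<in> {1..n + 1}"
    using residual_nodes_layer_le by fastforce
  have first: "{v \<in> residual_nodes X. fst v + 1 = 1} = {(0, X)}"
  proof (intro equalityI subsetI)
    fix v assume "v \<in> {v \<in> residual_nodes X. fst v + 1 = 1}"
    then obtain S where "v = (0, S)" "(0, S) \<in> residual_nodes X" by (cases v) auto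
    then show "v \<in> {(0, X)}" unfolding residual_nodes_def by (auto simp: residual_def)
  qed (use residual_nodes_root[OF assms(2)] in simp)
  have last: "{v \<in> residual_nodes X. fst v + 1 = n + 1} = {(n, {[]})}"
  proof (intro equalityI subsetI)
    fix v assume "v \<in> {v \<in> residual_nodes X. fst v + 1 = n + 1}"
    then obtain S where "v = (n, S)" "(n, S) \<in> residual_nodes X" by (cases v) auto
    with residual_nodes_last show "v \<in> {(n, {[]})}" by simp
  qed (use residual_nodes_term[OF assms(2)] in simp)
  have arcs: "\<forall>a\<in>?A. fst a \<in> residual_nodes X \<and>
      (\<lambda>(v, b). (fst v + 1, residual (snd v) [b])) a \<in> residual_nodes X \<and>
      fst (fst a) + 1 \<in> {1..n} \<and>
      fst ((\<lambda>(v, b). (fst v + 1, residual (snd v) [b])) a) + 1 = fst (fst a) + 1 + 1"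
  proof
    fix a assume a: "a \<in> ?A"
    obtain k S b where kSb: "a = ((k, S), b)" by (metis prod.collapse)
    with a have node: "(k, S) \<in> residual_nodes X" and b: "residual S [b] \<noteq> {}" by simp_all
    with kSb residual_nodes_layer_less[OF node b] residual_nodes_step[OF node b]
    show "fst a \<in> residual_nodes X \<and>
      (\<lambda>(v, b). (fst v + 1, residual (snd v) [b])) a \<in> residual_nodes X \<and>
      fst (fst a) + 1 \<in> {1..n} \<and>
      fst ((\<lambda>(v, b). (fst v + 1, residual (snd v) [b])) a) + 1 = fst (fst a) + 1 + 1"
      by simp
  qed
  have "\<forall>a\<in>?A. \<forall>b\<in>?A. fst a = fst b \<and> snd a = snd b \<longrightarrow> a = b"
    by (simp add: prod_eq_iff)
  with finite_residual_nodes[OF assms(1)] finite_A layers first last arcs show ?thesis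
    unfolding is_bdd_def residual_bdd_def bdd.simps by (intro conjI) assumption+
qed

end

section \<open>Reduced BDDs\<close>

text \<open>Minimality in is_reduced_bdd is only tested against BDDs over nat; renaming nodes and
  arcs injectively into nat transfers it to BDDs of any type.\<close>

definition rename_bdd :: "('v, 'a) bdd \<Rightarrow> ('v \<Rightarrow> nat) \<Rightarrow> ('a \<Rightarrow> nat) \<Rightarrow> (nat, nat) bdd" where
  "rename_bdd C fv fa = \<lparr>bdd_n = bdd_n C, bdd_N = fv ` bdd_N C, bdd_A = fa ` bdd_A C,
     bdd_layer = bdd_layer C \<circ> the_inv_into (bdd_N C) fv,
     bdd_src = fv \<circ> bdd_src C \<circ> the_inv_into (bdd_A C) fa,
     bdd_tgt = fv \<circ> bdd_tgt C \<circ> the_inv_into (bdd_A C) fa,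
     bdd_label = bdd_label C \<circ> the_inv_into (bdd_A C) fa,
     bdd_root = fv (bdd_root C), bdd_term = fv (bdd_term C)\<rparr>"

context bdd
begin

context
  fixes fv :: "'v \<Rightarrow> nat" and fa :: "'a \<Rightarrow> nat"
  assumes inj_fv: "inj_on fv (bdd_N B)" and inj_fa: "inj_on fa (bdd_A B)"
begin

private abbreviation "B' \<equiv> rename_bdd B fv fa"
private abbreviation "gv \<equiv> the_inv_into (bdd_N B) fv"
private abbreviation "ga \<equiv> the_inv_into (bdd_A B) fa"

lemma bdd_path_rename:
  "bdd_path B u v p \<Longrightarrow> bdd_path B' (fv u) (fv v) (map fa p)"
  by (induction p arbitrary: u) (auto simp: rename_bdd_def the_inv_into_f_f[OF inj_fa])

lemma bdd_path_rename_inv: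
  "\<lbrakk>bdd_path B' u' v' p'; u' \<in> fv ` bdd_N B; v' \<in> fv ` bdd_N B\<rbrakk> \<Longrightarrow> bdd_path B (gv u') (gv v') (map ga p')"
proof (induction p' arbitrary: u')
  case (Cons a' p')
  then obtain a where a: "a \<in> bdd_A B" "a' = fa a" "u' = fv (bdd_src B a)"
    and p': "bdd_path B' (fv (bdd_tgt B a)) v' p'"
    by (auto simp: rename_bdd_def the_inv_into_f_f[OF inj_fa])
  with Cons.IH[OF p'] Cons.prems(3) show ?case
    by (simp add: src_in_nodes tgt_in_nodes the_inv_into_f_f[OF inj_fv] the_inv_into_f_f[OF inj_fa])
qed (simp add: rename_bdd_def)

lemma bdd_X_rename_bdd: "bdd_X B' = bdd_X B"
proof (intro set_eqI iffI)
  fix s assume "s \<in> bdd_X B'"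
  then obtain p' where p': "bdd_path B' (fv (bdd_root B)) (fv (bdd_term B)) p'"
    and s: "s = map (bdd_label B \<circ> ga) p'"
    unfolding bdd_X_def by (auto simp: rename_bdd_def)
  have "bdd_path B (bdd_root B) (bdd_term B) (map ga p')"
    using bdd_path_rename_inv[OF p'] root_in_nodes term_in_nodes
    by (simp add: the_inv_into_f_f[OF inj_fv])
  with s show "s \<in> bdd_X B"
    unfolding bdd_X_def by (intro CollectI exI[of _ "map ga p'"]) simp
next
  fix s assume "s \<in> bdd_X B"
  then obtain p where p: "bdd_path B (bdd_root B) (bdd_term B) p" and s: "s = map (bdd_label B) p"
    unfolding bdd_X_def by auto
  have "map (bdd_label B \<circ> ga) (map fa p) = map (bdd_label B) p"
    using bdd_path_arcs[OF p] by (auto simp: the_inv_into_f_f[OF inj_fa] subset_iff)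
  with bdd_path_rename[OF p] s show "s \<in> bdd_X B'"
    unfolding bdd_X_def by (intro CollectI exI[of _ "map fa p"]) (simp add: rename_bdd_def)
qed

lemma is_bdd_rename_bdd: "is_bdd B'"
proof -
  have gv: "gv (fv u) = u" if "u \<in> bdd_N B" for u
    using that by (rule the_inv_into_f_f[OF inj_fv])
  have ga: "ga (fa a) = a" if "a \<in> bdd_A B" for a
    using that by (rule the_inv_into_f_f[OF inj_fa])
  have layers: "\<forall>u\<in>fv ` bdd_N B. bdd_layer B (gv u) \<in> {1..bdd_n B + 1}"
    using layer_bounds gv by simp
  have first: "{u \<in> fv ` bdd_N B. bdd_layer B (gv u) = 1} = {fv (bdd_root B)}"
  proof (intro equalityI subsetI)
    fix u assume "u \<in> {u \<in> fv ` bdd_N B. bdd_layer B (gv u) = 1}"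
    then obtain v where "v \<in> bdd_N B" "u = fv v" "bdd_layer B v = 1" using gv by auto
    then show "u \<in> {fv (bdd_root B)}" using root_if_layer_one by simp
  qed (use root_in_nodes layer_root gv in simp)
  have last: "{u \<in> fv ` bdd_N B. bdd_layer B (gv u) = bdd_n B + 1} = {fv (bdd_term B)}"
  proof (intro equalityI subsetI)
    fix u assume "u \<in> {u \<in> fv ` bdd_N B. bdd_layer B (gv u) = bdd_n B + 1}"
    then obtain v where "v \<in> bdd_N B" "u = fv v" "bdd_layer B v = bdd_n B + 1" using gv by auto
    then show "u \<in> {fv (bdd_term B)}" using term_if_layer_last by simp
  qed (use term_in_nodes layer_term gv in simp)
  have arcs: "\<forall>a'\<in>fa ` bdd_A B. fv (bdd_src B (ga a')) \<in> fv ` bdd_N B \<and>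
      fv (bdd_tgt B (ga a')) \<in> fv ` bdd_N B \<and>
      bdd_layer B (gv (fv (bdd_src B (ga a')))) \<in> {1..bdd_n B} \<and>
      bdd_layer B (gv (fv (bdd_tgt B (ga a')))) = bdd_layer B (gv (fv (bdd_src B (ga a')))) + 1"
    using src_in_nodes tgt_in_nodes src_layer_bounds tgt_layer gv ga by simp
  have det: "\<forall>a'\<in>fa ` bdd_A B. \<forall>b'\<in>fa ` bdd_A B.
      fv (bdd_src B (ga a')) = fv (bdd_src B (ga b')) \<and> bdd_label B (ga a') = bdd_label B (ga b')
      \<longrightarrow> a' = b'"
  proof (intro ballI impI)
    fix a' b' assume "a' \<in> fa ` bdd_A B" "b' \<in> fa ` bdd_A B"
      and eq: "fv (bdd_src B (ga a')) = fv (bdd_src B (ga b')) \<and> bdd_label B (ga a') = bdd_label B (ga b')"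
    then obtain a b where ab: "a \<in> bdd_A B" "b \<in> bdd_A B" "a' = fa a" "b' = fa b" by auto
    with eq have "bdd_src B a = bdd_src B b" "bdd_label B a = bdd_label B b"
      using inj_onD[OF inj_fv] src_in_nodes ga by auto
    with ab arc_eqI[OF ab(1,2)] show "a' = b'" by simp
  qed
  show ?thesis
    unfolding is_bdd_def rename_bdd_def bdd.simps comp_def
    using finite_nodes finite_arcs layers first last arcs det by (simp only: finite_imageI simp_thms)
qed

end

lemma ex_nat_bdd: "\<exists>C :: (nat, nat) bdd. is_bdd C \<and> bdd_n C = bdd_n B \<and> bdd_X C = bdd_X B \<and> card (bdd_N C) = card (bdd_N B)"
proof -
  obtain fv :: "'v \<Rightarrow> nat" where fv: "inj_on fv (bdd_N B)"
    using finite_imp_inj_to_nat_seg[OF finite_nodes] by blast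
  obtain fa :: "'a \<Rightarrow> nat" where fa: "inj_on fa (bdd_A B)"
    using finite_imp_inj_to_nat_seg[OF finite_arcs] by blast
  show ?thesis
    using is_bdd_rename_bdd[OF fv fa] bdd_X_rename_bdd[OF fv fa] card_image[OF fv]
    by (intro exI[of _ "rename_bdd B fv fa"]) (simp add: rename_bdd_def)
qed

end

lemma reduced_bdd_card_le:
  assumes "is_reduced_bdd R" "is_bdd C" "bdd_n C = bdd_n R" "bdd_X C = bdd_X R"
  shows "card (bdd_N R) \<le> card (bdd_N C)"
  using bdd.ex_nat_bdd[of C] assms unfolding bdd_def is_reduced_bdd_def by fastforce

definition node_signature :: "('v, 'a) bdd \<Rightarrow> 'v \<Rightarrow> nat \<times> bool list set" where
  "node_signature B u = (bdd_layer B u - 1, suffixes B u)"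

lemma (in bdd) node_signature_image_useful:
  "node_signature B ` {u \<in> bdd_N B. useful B u} = residual_nodes (bdd_X B)"
proof (intro equalityI subsetI)
  fix v assume "v \<in> node_signature B ` {u \<in> bdd_N B. useful B u}"
  then obtain u p q where v: "v = node_signature B u"
    and p: "bdd_path B (bdd_root B) u p" and q: "bdd_path B u (bdd_term B) q"
    unfolding useful_def by auto
  have "suffixes B u \<noteq> {}" using q unfolding suffixes_def by auto
  with root_path_layer[OF p] suffixes_eq_residual[OF p]
  show "v \<in> residual_nodes (bdd_X B)"
    unfolding v node_signature_def residual_nodes_def
    by (intro CollectI exI[of _ "map (bdd_label B) p"]) simp
next
  fix v assume "v \<in> residual_nodes (bdd_X B)"
  then obtain s t where v: "v = (length s, residual (bdd_X B) s)" and st: "s @ t \<in> bdd_X B"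
    unfolding residual_nodes_def residual_def by auto
  from st obtain u where "u \<in> bdd_N B" "useful B u" "bdd_layer B u = length s + 1"
    "suffixes B u = residual (bdd_X B) s"
    by (rule prefix_node)
  then show "v \<in> node_signature B ` {u \<in> bdd_N B. useful B u}"
    unfolding v node_signature_def by force
qed

text \<open>Minimality against the residual BDD, whose nodes are exactly the signatures of useful
  nodes, forces the signature map to be a bijection from all nodes onto them.\<close>

lemma reduced_bdd_canonical:
  assumes reduced: "is_reduced_bdd R" and nonempty: "bdd_X R \<noteq> {}"
  shows "{u \<in> bdd_N R. useful R u} = bdd_N R \<and> inj_on (node_signature R) (bdd_N R)"
proof -
  interpret R: bdd R using reduced unfolding is_reduced_bdd_def bdd_def by simp
  let ?X = "bdd_X R" and ?U = "{u \<in> bdd_N R. useful R u}"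
  have X_length: "\<forall>x\<in>?X. length x = bdd_n R" using R.length_if_in_X by blast
  have "card (bdd_N R) \<le> card (bdd_N (residual_bdd (bdd_n R) ?X))"
    using reduced_bdd_card_le[OF reduced is_bdd_residual_bdd[OF X_length R.finite_X nonempty]]
      bdd_X_residual_bdd[OF X_length nonempty] by (simp add: residual_bdd_def)
  also have "\<dots> = card (node_signature R ` ?U)"
    by (simp add: residual_bdd_def R.node_signature_image_useful)
  finally have le_image: "card (bdd_N R) \<le> card (node_signature R ` ?U)" .
  also have "\<dots> \<le> card ?U" using R.finite_nodes by (intro card_image_le) simp
  finally have le: "card (bdd_N R) \<le> card ?U" .
  have U_eq: "?U = bdd_N R"
    using card_subset_eq[OF R.finite_nodes _] card_mono[OF R.finite_nodes] le
    by (metis (no_types, lifting) le_antisym mem_Collect_eq subsetI)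
  have "card (node_signature R ` bdd_N R) = card (bdd_N R)"
    using le_image card_image_le[OF R.finite_nodes, of "node_signature R"] U_eq by simp
  with U_eq show ?thesis using eq_card_imp_inj_on R.finite_nodes by blast
qed

lemma reduced_bdd_useful:
  "\<lbrakk>is_reduced_bdd R; bdd_X R \<noteq> {}; u \<in> bdd_N R\<rbrakk> \<Longrightarrow> useful R u"
  using reduced_bdd_canonical by blast

lemma reduced_bdd_node_eqI:
  "\<lbrakk>is_reduced_bdd R; bdd_X R \<noteq> {}; u \<in> bdd_N R; w \<in> bdd_N R;
    bdd_layer R u = bdd_layer R w; suffixes R u = suffixes R w\<rbrakk> \<Longrightarrow> u = w"
proof -
  assume assms: "is_reduced_bdd R" "bdd_X R \<noteq> {}" "u \<in> bdd_N R" "w \<in> bdd_N R"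
    "bdd_layer R u = bdd_layer R w" "suffixes R u = suffixes R w"
  then have "node_signature R u = node_signature R w" by (simp add: node_signature_def)
  with assms(3,4) reduced_bdd_canonical[OF assms(1,2)] show "u = w" by (meson inj_onD)
qed

section \<open>Lifting flows\<close>

context bdd
begin

lemma positive_outflow_reaches_term:
  assumes flow: "(x, y) \<in> Fcap B"
    and "u \<in> bdd_N B" "u \<noteq> bdd_term B" "(\<Sum>a\<in>out_arcs B u. y a) > 0"
  shows "\<exists>p. bdd_path B u (bdd_term B) p"
  using assms(2-)
proof (induction "bdd_n B + 1 - bdd_layer B u" arbitrary: u rule: less_induct)
  case less
  have nonneg: "\<forall>a\<in>bdd_A B. 0 \<le> y a"
    and conservation: "\<forall>v\<in>bdd_N B - {bdd_root B, bdd_term B}.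
      (\<Sum>a\<in>out_arcs B v. y a) = (\<Sum>a\<in>in_arcs B v. y a)"
    using flow unfolding Fcap_def by auto
  obtain a where a: "a \<in> out_arcs B u" "y a > 0"
    using less.prems(3) by (metis not_less sum_nonpos)
  then have arc: "a \<in> bdd_A B" "bdd_src B a = u" unfolding out_arcs_def by auto
  let ?v = "bdd_tgt B a"
  show ?case
  proof (cases "?v = bdd_term B")
    case True
    with arc show ?thesis by (intro exI[of _ "[a]"]) simp
  next
    case False
    have layer_v: "bdd_layer B ?v = bdd_layer B u + 1" using tgt_layer[OF arc(1)] arc(2) by simp
    then have "?v \<noteq> bdd_root B" using layer_root layer_bounds[OF less.prems(1)] by auto
    have "a \<in> in_arcs B ?v" using arc unfolding in_arcs_def by simp
    then have "y a \<le> (\<Sum>a\<in>in_arcs B ?v. y a)"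
      using nonneg by (intro member_le_sum finite_in_arcs) (auto simp: in_arcs_def)
    also have "\<dots> = (\<Sum>a\<in>out_arcs B ?v. y a)"
      using conservation tgt_in_nodes[OF arc(1)] False \<open>?v \<noteq> bdd_root B\<close> by simp
    finally have "(\<Sum>a\<in>out_arcs B ?v. y a) > 0" using a(2) by simp
    moreover have "bdd_n B + 1 - bdd_layer B ?v < bdd_n B + 1 - bdd_layer B u"
      using layer_v layer_bounds[OF tgt_in_nodes[OF arc(1)]] by auto
    ultimately obtain p where "bdd_path B ?v (bdd_term B) p"
      using less.hyps tgt_in_nodes[OF arc(1)] False by blast
    with arc show ?thesis by (intro exI[of _ "a # p"]) simp
  qed
qed

lemma Fcap_empty_if_X_empty:
  assumes "bdd_X B = {}"
  shows "Fcap B = {}"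
proof (rule ccontr)
  assume "Fcap B \<noteq> {}"
  then obtain x y where flow: "(x, y) \<in> Fcap B" by auto
  have "bdd_root B \<noteq> bdd_term B"
    using assms unfolding bdd_X_def by (metis (mono_tags, lifting) bdd_path.simps(1) empty_iff mem_Collect_eq)
  moreover have "(\<Sum>a\<in>out_arcs B (bdd_root B). y a) > 0"
    using flow unfolding Fcap_def by simp
  ultimately obtain p where "bdd_path B (bdd_root B) (bdd_term B) p"
    using positive_outflow_reaches_term[OF flow root_in_nodes] by blast
  with assms show False unfolding bdd_X_def by blast
qed

end

locale bdd_hom = B: bdd B + R: bdd R
  for B :: "('v, 'a) bdd" and R :: "('w, 'b) bdd" +
  assumes same_n: "bdd_n R = bdd_n B"
    and same_X: "bdd_X R = bdd_X B"
    and X_nonempty: "bdd_X B \<noteq> {}"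
    and R_useful: "w \<in> bdd_N R \<Longrightarrow> useful R w"
    and R_node_eqI: "\<lbrakk>w \<in> bdd_N R; w' \<in> bdd_N R; bdd_layer R w = bdd_layer R w';
      suffixes R w = suffixes R w'\<rbrakk> \<Longrightarrow> w = w'"
begin

definition hom_node :: "'v \<Rightarrow> 'w" where
  "hom_node u = (THE w. w \<in> bdd_N R \<and> bdd_layer R w = bdd_layer B u \<and> suffixes R w = suffixes B u)"

lemma matching_node_exists:
  assumes "useful B u"
  shows "\<exists>w\<in>bdd_N R. bdd_layer R w = bdd_layer B u \<and> suffixes R w = suffixes B u"
proof -
  obtain p where p: "bdd_path B (bdd_root B) u p" using assms unfolding useful_def by auto
  let ?s = "map (bdd_label B) p"
  obtain t where "t \<in> suffixes B u" using useful_suffixes_nonempty[OF assms] by auto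
  then have "?s @ t \<in> bdd_X R" using B.suffixes_eq_residual[OF p] same_X by (simp add: residual_def)
  then obtain w where "w \<in> bdd_N R" "bdd_layer R w = length ?s + 1" "suffixes R w = residual (bdd_X R) ?s"
    by (rule R.prefix_node)
  with B.root_path_layer[OF p] B.suffixes_eq_residual[OF p] same_X show ?thesis by auto
qed

lemma hom_node:
  assumes "useful B u"
  shows "hom_node u \<in> bdd_N R \<and> bdd_layer R (hom_node u) = bdd_layer B u \<and>
    suffixes R (hom_node u) = suffixes B u"
proof -
  obtain w where w: "w \<in> bdd_N R" "bdd_layer R w = bdd_layer B u" "suffixes R w = suffixes B u"
    using matching_node_exists[OF assms] by blast
  show ?thesis
    unfolding hom_node_def
  proof (rule theI)
    fix w' assume "w' \<in> bdd_N R \<and> bdd_layer R w' = bdd_layer B u \<and> suffixes R w' = suffixes B u"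
    with w show "w' = w" using R_node_eqI[of w' w] by simp
  qed (use w in simp)
qed

lemma hom_node_eqI:
  assumes "useful B u" "w \<in> bdd_N R" "bdd_layer R w = bdd_layer B u" "suffixes R w = suffixes B u"
  shows "hom_node u = w"
  using hom_node[OF assms(1)] assms(2-) R_node_eqI[of "hom_node u" w] by simp

lemma useful_root: "useful B (bdd_root B)"
  and useful_term: "useful B (bdd_term B)"
  using X_nonempty unfolding bdd_X_def useful_def by (auto intro: exI[of _ "[]"])

lemma hom_node_root: "hom_node (bdd_root B) = bdd_root R"
  using hom_node[OF useful_root] B.layer_root R.root_if_layer_one by simp

lemma hom_node_term: "hom_node (bdd_term B) = bdd_term R"
  using hom_node[OF useful_term] B.layer_term R.term_if_layer_last same_n by simp

definition useful_arcs :: "'a set" where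
  "useful_arcs = {a \<in> bdd_A B. useful B (bdd_src B a) \<and> useful B (bdd_tgt B a)}"

definition hom_arc :: "'a \<Rightarrow> 'b" where
  "hom_arc a = (THE a'. a' \<in> bdd_A R \<and> bdd_src R a' = hom_node (bdd_src B a) \<and> bdd_label R a' = bdd_label B a)"

lemma hom_arc_eqI:
  assumes "a' \<in> bdd_A R" "bdd_src R a' = hom_node (bdd_src B a)" "bdd_label R a' = bdd_label B a"
  shows "hom_arc a = a'"
  unfolding hom_arc_def
proof (rule the_equality)
  fix b assume "b \<in> bdd_A R \<and> bdd_src R b = hom_node (bdd_src B a) \<and> bdd_label R b = bdd_label B a"
  with assms show "b = a'" using R.arc_eqI[of b a'] by simp
qed (use assms in simp)

lemma hom_arc:
  assumes a: "a \<in> useful_arcs"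
  shows "hom_arc a \<in> bdd_A R \<and> bdd_src R (hom_arc a) = hom_node (bdd_src B a) \<and>
    bdd_label R (hom_arc a) = bdd_label B a \<and> bdd_tgt R (hom_arc a) = hom_node (bdd_tgt B a)"
proof -
  let ?u = "bdd_src B a" and ?v = "bdd_tgt B a"
  have arc: "a \<in> bdd_A B" and u: "useful B ?u" and v: "useful B ?v"
    using a unfolding useful_arcs_def by auto
  obtain t where "t \<in> suffixes B ?v" using useful_suffixes_nonempty[OF v] by auto
  then have "bdd_label B a # t \<in> suffixes R (hom_node ?u)"
    using B.suffixes_tgt[OF arc] hom_node[OF u] by (simp add: residual_def)
  then obtain a' Q where "bdd_path R (hom_node ?u) (bdd_term R) (a' # Q)"
    and label: "bdd_label R a' = bdd_label B a"
    unfolding suffixes_def by (auto simp: Cons_eq_map_conv)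
  then have a': "a' \<in> bdd_A R" "bdd_src R a' = hom_node ?u" by auto
  have "suffixes R (bdd_tgt R a') = suffixes B ?v"
    using R.suffixes_tgt[OF a'(1)] B.suffixes_tgt[OF arc] a'(2) label hom_node[OF u] by simp
  moreover have "bdd_layer R (bdd_tgt R a') = bdd_layer B ?v"
    using R.tgt_layer[OF a'(1)] B.tgt_layer[OF arc] a'(2) hom_node[OF u] by simp
  ultimately have "hom_node ?v = bdd_tgt R a'"
    using hom_node_eqI[OF v R.tgt_in_nodes[OF a'(1)]] by simp
  with a' label hom_arc_eqI[OF a' label] show ?thesis by simp
qed

lemma hom_arc_lift:
  assumes u: "useful B u" and a': "a' \<in> bdd_A R" "bdd_src R a' = hom_node u"
  shows "\<exists>a\<in>useful_arcs. bdd_src B a = u \<and> hom_arc a = a'"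
proof -
  obtain s where s: "bdd_path R (bdd_tgt R a') (bdd_term R) s"
    using R_useful[OF R.tgt_in_nodes[OF a'(1)]] unfolding useful_def by auto
  with a' have "map (bdd_label R) (a' # s) \<in> suffixes R (hom_node u)"
    unfolding suffixes_def by (intro CollectI exI[of _ "a' # s"]) simp
  then have "map (bdd_label R) (a' # s) \<in> suffixes B u" using hom_node[OF u] by simp
  then obtain P where P: "bdd_path B u (bdd_term B) P" "map (bdd_label B) P = map (bdd_label R) (a' # s)"
    unfolding suffixes_def mem_Collect_eq by metis
  then obtain a P' where "P = a # P'" by (cases P) auto
  with P have arc: "a \<in> bdd_A B" "bdd_src B a = u" and P': "bdd_path B (bdd_tgt B a) (bdd_term B) P'"
    and label: "bdd_label B a = bdd_label R a'"
    by simp_all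
  obtain p where "bdd_path B (bdd_root B) u p" using u unfolding useful_def by auto
  with arc have "bdd_path B (bdd_root B) (bdd_tgt B a) (p @ [a])"
    unfolding bdd_path_append by auto
  with P' have "useful B (bdd_tgt B a)" unfolding useful_def by blast
  with arc u have "a \<in> useful_arcs" unfolding useful_arcs_def by simp
  moreover have "hom_arc a = a'" using hom_arc_eqI[OF a'(1)] a'(2) arc label by simp
  ultimately show ?thesis using arc by blast
qed

definition fibre :: "'w \<Rightarrow> 'v set" where
  "fibre w = {u \<in> bdd_N B. useful B u \<and> hom_node u = w}"

lemma layer_fibre: "u \<in> fibre w \<Longrightarrow> bdd_layer B u = bdd_layer R w"
  unfolding fibre_def using hom_node by auto

lemma bij_betw_hom_arc_out_arcs:
  assumes "useful B u"
  shows "bij_betw hom_arc {a \<in> out_arcs B u. a \<in> useful_arcs} (out_arcs R (hom_node u))"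
proof (rule bij_betw_imageI)
  show "inj_on hom_arc {a \<in> out_arcs B u. a \<in> useful_arcs}"
  proof (rule inj_onI)
    fix a b assume "a \<in> {a \<in> out_arcs B u. a \<in> useful_arcs}" "b \<in> {a \<in> out_arcs B u. a \<in> useful_arcs}"
      and "hom_arc a = hom_arc b"
    with hom_arc[of a] hom_arc[of b] show "a = b"
      unfolding out_arcs_def useful_arcs_def by (intro B.arc_eqI) auto
  qed
  show "hom_arc ` {a \<in> out_arcs B u. a \<in> useful_arcs} = out_arcs R (hom_node u)"
  proof (intro equalityI subsetI)
    fix a' assume "a' \<in> hom_arc ` {a \<in> out_arcs B u. a \<in> useful_arcs}"
    then obtain a where "a \<in> useful_arcs" "bdd_src B a = u" "a' = hom_arc a"
      unfolding out_arcs_def by auto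
    with hom_arc[of a] show "a' \<in> out_arcs R (hom_node u)" unfolding out_arcs_def by auto
  next
    fix a' assume "a' \<in> out_arcs R (hom_node u)"
    then obtain a where "a \<in> useful_arcs" "bdd_src B a = u" "hom_arc a = a'"
      using hom_arc_lift[OF assms] unfolding out_arcs_def by auto
    then show "a' \<in> hom_arc ` {a \<in> out_arcs B u. a \<in> useful_arcs}"
      unfolding out_arcs_def useful_arcs_def by auto
  qed
qed

lemma bij_betw_src_fibre:
  assumes a': "a' \<in> bdd_A R"
  shows "bij_betw (bdd_src B) {a \<in> useful_arcs. hom_arc a = a'} (fibre (bdd_src R a'))"
proof (rule bij_betw_imageI)
  show "inj_on (bdd_src B) {a \<in> useful_arcs. hom_arc a = a'}"
  proof (rule inj_onI)
    fix a b assume "a \<in> {a \<in> useful_arcs. hom_arc a = a'}" "b \<in> {a \<in> useful_arcs. hom_arc a = a'}"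
      and "bdd_src B a = bdd_src B b"
    with hom_arc[of a] hom_arc[of b] show "a = b"
      unfolding useful_arcs_def by (intro B.arc_eqI) auto
  qed
  show "bdd_src B ` {a \<in> useful_arcs. hom_arc a = a'} = fibre (bdd_src R a')"
  proof (intro equalityI subsetI)
    fix u assume "u \<in> bdd_src B ` {a \<in> useful_arcs. hom_arc a = a'}"
    then obtain a where "a \<in> useful_arcs" "hom_arc a = a'" "u = bdd_src B a" by auto
    with hom_arc[of a] B.useful_in_nodes show "u \<in> fibre (bdd_src R a')"
      unfolding fibre_def useful_arcs_def by auto
  next
    fix u assume "u \<in> fibre (bdd_src R a')"
    then have "useful B u" "bdd_src R a' = hom_node u" unfolding fibre_def by auto
    with hom_arc_lift[OF _ a'] show "u \<in> bdd_src B ` {a \<in> useful_arcs. hom_arc a = a'}"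
      by force
  qed
qed

end

locale flow_lift = bdd_hom B R for B :: "('v, 'a) bdd" and R :: "('w, 'b) bdd" +
  fixes x :: "nat \<Rightarrow> real" and y :: "'b \<Rightarrow> real"
  assumes flow: "(x, y) \<in> Fcap R"
begin

lemma x_bounds: "i \<in> {1..bdd_n R} \<Longrightarrow> 0 \<le> x i \<and> x i \<le> 1"
  and flow_nonneg: "a' \<in> bdd_A R \<Longrightarrow> 0 \<le> y a'"
  and flow_conservation: "\<lbrakk>w \<in> bdd_N R; w \<noteq> bdd_root R; w \<noteq> bdd_term R\<rbrakk> \<Longrightarrow>
    (\<Sum>a'\<in>out_arcs R w. y a') = (\<Sum>a'\<in>in_arcs R w. y a')"
  and flow_root: "(\<Sum>a'\<in>out_arcs R (bdd_root R). y a') = 1"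
  and flow_term: "(\<Sum>a'\<in>in_arcs R (bdd_term R). y a') = 1"
  and flow_cap_one: "\<lbrakk>a' \<in> bdd_A R; bdd_label R a'\<rbrakk> \<Longrightarrow> y a' \<le> x (bdd_layer R (bdd_src R a'))"
  and flow_cap_zero: "\<lbrakk>a' \<in> bdd_A R; \<not> bdd_label R a'\<rbrakk> \<Longrightarrow> y a' \<le> 1 - x (bdd_layer R (bdd_src R a'))"
  using flow unfolding Fcap_def by auto

definition outflow :: "'w \<Rightarrow> real" where
  "outflow w = (\<Sum>a'\<in>out_arcs R w. y a')"

definition throughflow :: "'w \<Rightarrow> real" where
  "throughflow w = (if w = bdd_root R then 1 else \<Sum>a'\<in>in_arcs R w. y a')"

definition split_ratio :: "'b \<Rightarrow> real" where
  "split_ratio a' = y a' / outflow (bdd_src R a')"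

text \<open>The inflow of a node is defined by recursion on its depth (layer minus one), the
  sources of its in-arcs lying one layer earlier.\<close>

primrec inflow_at_depth :: "nat \<Rightarrow> 'v \<Rightarrow> real" where
  "inflow_at_depth 0 u = (if u = bdd_root B then 1 else 0)"
| "inflow_at_depth (Suc k) u =
     (\<Sum>a\<in>{a \<in> in_arcs B u. a \<in> useful_arcs}. inflow_at_depth k (bdd_src B a) * split_ratio (hom_arc a))"

definition lifted_inflow :: "'v \<Rightarrow> real" where
  "lifted_inflow u = inflow_at_depth (bdd_layer B u - 1) u"

definition lifted_flow :: "'a \<Rightarrow> real" where
  "lifted_flow a = (if a \<in> useful_arcs then lifted_inflow (bdd_src B a) * split_ratio (hom_arc a) else 0)"

lemma finite_useful_arcs: "finite useful_arcs"
  unfolding useful_arcs_def using B.finite_arcs by simp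

lemma finite_fibre: "finite (fibre w)"
  unfolding fibre_def using B.finite_nodes by simp

lemma outflow_nonneg: "0 \<le> outflow w"
  unfolding outflow_def out_arcs_def using flow_nonneg by (auto intro: sum_nonneg)

lemma split_ratio_nonneg: "a' \<in> bdd_A R \<Longrightarrow> 0 \<le> split_ratio a'"
  unfolding split_ratio_def using flow_nonneg outflow_nonneg by simp

lemma lifted_inflow_nonneg: "0 \<le> lifted_inflow u"
proof -
  have "0 \<le> inflow_at_depth k u" for k
  proof (induction k arbitrary: u)
    case (Suc k)
    show ?case unfolding inflow_at_depth.simps
      by (rule sum_nonneg) (use Suc split_ratio_nonneg hom_arc in auto)
  qed simp
  then show ?thesis unfolding lifted_inflow_def .
qed

lemma lifted_flow_nonneg: "0 \<le> lifted_flow a"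
  unfolding lifted_flow_def using lifted_inflow_nonneg split_ratio_nonneg hom_arc by auto

lemma outflow_eq_throughflow: "\<lbrakk>w \<in> bdd_N R; w \<noteq> bdd_term R\<rbrakk> \<Longrightarrow> outflow w = throughflow w"
  unfolding outflow_def throughflow_def using flow_conservation flow_root by auto

lemma split_ratio_mult_outflow:
  assumes "a' \<in> bdd_A R"
  shows "split_ratio a' * outflow (bdd_src R a') = y a'"
proof (cases "outflow (bdd_src R a') = 0")
  case True
  have "a' \<in> out_arcs R (bdd_src R a')" using assms unfolding out_arcs_def by simp
  with True have "y a' = 0"
    using sum_nonneg_eq_0_iff[OF R.finite_out_arcs] flow_nonneg
    unfolding outflow_def out_arcs_def by blast
  with True show ?thesis by simp
qed (simp add: split_ratio_def)

lemma sum_split_ratio: "(\<Sum>a'\<in>out_arcs R w. split_ratio a') = (if outflow w = 0 then 0 else 1)"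
proof -
  have "(\<Sum>a'\<in>out_arcs R w. split_ratio a') = (\<Sum>a'\<in>out_arcs R w. y a' / outflow w)"
    unfolding split_ratio_def out_arcs_def by simp
  also have "\<dots> = outflow w / outflow w" unfolding outflow_def by (simp only: sum_divide_distrib)
  finally show ?thesis by simp
qed

lemma inflow_lifted_flow:
  assumes u: "u \<in> bdd_N B" "u \<noteq> bdd_root B"
  shows "(\<Sum>a\<in>in_arcs B u. lifted_flow a) = lifted_inflow u"
proof -
  have layer: "bdd_layer B u = Suc (Suc (bdd_layer B u - 2))"
    using B.layer_bounds[OF u(1)] B.root_if_layer_one[OF u(1)] u(2) by fastforce
  have "(\<Sum>a\<in>in_arcs B u. lifted_flow a)
      = (\<Sum>a\<in>{a \<in> in_arcs B u. a \<in> useful_arcs}. lifted_inflow (bdd_src B a) * split_ratio (hom_arc a))"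
    unfolding lifted_flow_def by (simp add: sum.inter_filter[OF B.finite_in_arcs])
  also have "\<dots> = (\<Sum>a\<in>{a \<in> in_arcs B u. a \<in> useful_arcs}.
      inflow_at_depth (bdd_layer B u - 2) (bdd_src B a) * split_ratio (hom_arc a))"
  proof (rule sum.cong[OF refl])
    fix a assume "a \<in> {a \<in> in_arcs B u. a \<in> useful_arcs}"
    then have "bdd_layer B (bdd_src B a) - 1 = bdd_layer B u - 2"
      using B.tgt_layer unfolding in_arcs_def by force
    then show "lifted_inflow (bdd_src B a) * split_ratio (hom_arc a)
        = inflow_at_depth (bdd_layer B u - 2) (bdd_src B a) * split_ratio (hom_arc a)"
      unfolding lifted_inflow_def by simp
  qed
  also have "\<dots> = lifted_inflow u"
    unfolding lifted_inflow_def by (subst layer) simp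
  finally show ?thesis .
qed

lemma lifted_inflow_useless: "\<lbrakk>u \<in> bdd_N B; \<not> useful B u\<rbrakk> \<Longrightarrow> lifted_inflow u = 0"
proof -
  assume u: "u \<in> bdd_N B" "\<not> useful B u"
  then have "u \<noteq> bdd_root B" using useful_root by auto
  with u have "lifted_inflow u = (\<Sum>a\<in>in_arcs B u. lifted_flow a)" using inflow_lifted_flow by simp
  also have "\<dots> = 0"
    using u(2) unfolding lifted_flow_def useful_arcs_def in_arcs_def by (auto intro: sum.neutral)
  finally show ?thesis .
qed

lemma sum_lifted_flow_hom_arc:
  assumes "a' \<in> bdd_A R"
  shows "(\<Sum>a\<in>{a \<in> useful_arcs. hom_arc a = a'}. lifted_flow a)
    = split_ratio a' * (\<Sum>u\<in>fibre (bdd_src R a'). lifted_inflow u)"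
proof -
  have "(\<Sum>a\<in>{a \<in> useful_arcs. hom_arc a = a'}. lifted_flow a)
      = (\<Sum>a\<in>{a \<in> useful_arcs. hom_arc a = a'}. split_ratio a' * lifted_inflow (bdd_src B a))"
    unfolding lifted_flow_def by (rule sum.cong) auto
  also have "\<dots> = split_ratio a' * (\<Sum>a\<in>{a \<in> useful_arcs. hom_arc a = a'}. lifted_inflow (bdd_src B a))"
    by (simp add: sum_distrib_left)
  also have "\<dots> = split_ratio a' * (\<Sum>u\<in>fibre (bdd_src R a'). lifted_inflow u)"
    using sum.reindex_bij_betw[OF bij_betw_src_fibre[OF assms], of lifted_inflow] by simp
  finally show ?thesis .
qed

lemma sum_fibre_lifted_inflow_eq_sum_in_arcs:
  assumes w: "w \<in> bdd_N R" "w \<noteq> bdd_root R"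
  shows "(\<Sum>u\<in>fibre w. lifted_inflow u)
    = (\<Sum>a'\<in>in_arcs R w. \<Sum>a\<in>{a \<in> useful_arcs. hom_arc a = a'}. lifted_flow a)"
proof -
  define S where "S = {a \<in> useful_arcs. hom_node (bdd_tgt B a) = w}"
  have finite_S: "finite S" unfolding S_def using finite_useful_arcs by simp
  have "lifted_inflow u = (\<Sum>a\<in>{a \<in> S. bdd_tgt B a = u}. lifted_flow a)" if u: "u \<in> fibre w" for u
  proof -
    have "u \<in> bdd_N B" "hom_node u = w" using u unfolding fibre_def by auto
    moreover have "u \<noteq> bdd_root B"
      using layer_fibre[OF u] w B.layer_root R.root_if_layer_one by force
    ultimately show ?thesis
      using inflow_lifted_flow[symmetric]
      by (simp, intro sum.mono_neutral_right B.finite_in_arcs)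
        (auto simp: S_def useful_arcs_def in_arcs_def lifted_flow_def)
  qed
  then have "(\<Sum>u\<in>fibre w. lifted_inflow u) = (\<Sum>u\<in>fibre w. \<Sum>a\<in>{a \<in> S. bdd_tgt B a = u}. lifted_flow a)"
    by simp
  also have "\<dots> = (\<Sum>a\<in>S. lifted_flow a)"
    by (rule sum.group[OF finite_S finite_fibre])
      (auto simp: S_def fibre_def useful_arcs_def intro: B.useful_in_nodes)
  also have "\<dots> = (\<Sum>a'\<in>in_arcs R w. \<Sum>a\<in>{a \<in> S. hom_arc a = a'}. lifted_flow a)"
    by (rule sum.group[OF finite_S R.finite_in_arcs, symmetric])
      (auto simp: S_def in_arcs_def dest: hom_arc)
  also have "\<dots> = (\<Sum>a'\<in>in_arcs R w. \<Sum>a\<in>{a \<in> useful_arcs. hom_arc a = a'}. lifted_flow a)"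
    by (intro sum.cong refl arg_cong[where f = "\<lambda>A. sum lifted_flow A"])
      (auto simp: S_def in_arcs_def dest: hom_arc)
  finally show ?thesis .
qed

lemma fibre_root: "fibre (bdd_root R) = {bdd_root B}"
proof (intro equalityI subsetI)
  fix u assume u: "u \<in> fibre (bdd_root R)"
  then have "u \<in> bdd_N B" unfolding fibre_def by simp
  with layer_fibre[OF u] show "u \<in> {bdd_root B}" using B.root_if_layer_one R.layer_root by simp
qed (use B.root_in_nodes useful_root hom_node_root in \<open>simp add: fibre_def\<close>)

lemma fibre_term: "fibre (bdd_term R) = {bdd_term B}"
proof (intro equalityI subsetI)
  fix u assume u: "u \<in> fibre (bdd_term R)"
  then have "u \<in> bdd_N B" unfolding fibre_def by simp
  with layer_fibre[OF u] show "u \<in> {bdd_term B}" using B.term_if_layer_last R.layer_term same_n by simp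
qed (use B.term_in_nodes useful_term hom_node_term in \<open>simp add: fibre_def\<close>)

lemma sum_fibre_lifted_inflow:
  assumes "w \<in> bdd_N R"
  shows "(\<Sum>u\<in>fibre w. lifted_inflow u) = throughflow w"
proof -
  have "\<forall>w\<in>bdd_N R. bdd_layer R w = k + 1 \<longrightarrow> (\<Sum>u\<in>fibre w. lifted_inflow u) = throughflow w" for k
  proof (induction k)
    case 0
    show ?case
    proof (intro ballI impI)
      fix w assume "w \<in> bdd_N R" "bdd_layer R w = 0 + 1"
      then have "w = bdd_root R" using R.root_if_layer_one by simp
      then show "(\<Sum>u\<in>fibre w. lifted_inflow u) = throughflow w"
        using fibre_root B.layer_root unfolding lifted_inflow_def throughflow_def by simp
    qed
  next
    case (Suc k)
    show ?case
    proof (intro ballI impI)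
      fix w assume w: "w \<in> bdd_N R" "bdd_layer R w = Suc k + 1"
      then have not_root: "w \<noteq> bdd_root R" using R.layer_root by auto
      have "split_ratio a' * (\<Sum>u\<in>fibre (bdd_src R a'). lifted_inflow u) = y a'"
        if "a' \<in> in_arcs R w" for a'
      proof -
        have a': "a' \<in> bdd_A R" "bdd_tgt R a' = w" using that unfolding in_arcs_def by auto
        then have layer: "bdd_layer R (bdd_src R a') = k + 1" using R.tgt_layer[OF a'(1)] w(2) by simp
        have "bdd_src R a' \<noteq> bdd_term R" using R.src_layer_bounds[OF a'(1)] R.layer_term by auto
        with layer R.src_in_nodes[OF a'(1)] show ?thesis
          using Suc.IH outflow_eq_throughflow split_ratio_mult_outflow[OF a'(1)] by simp
      qed
      then show "(\<Sum>u\<in>fibre w. lifted_inflow u) = throughflow w"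
        using sum_fibre_lifted_inflow_eq_sum_in_arcs[OF w(1) not_root] sum_lifted_flow_hom_arc not_root
        unfolding throughflow_def in_arcs_def by simp
    qed
  qed
  moreover have "bdd_layer R w = (bdd_layer R w - 1) + 1" using R.layer_bounds[OF assms] by simp
  ultimately show ?thesis using assms by blast
qed

lemma lifted_inflow_le_outflow:
  assumes "useful B u" "u \<noteq> bdd_term B"
  shows "lifted_inflow u \<le> outflow (hom_node u)"
proof -
  have u: "u \<in> fibre (hom_node u)" unfolding fibre_def using assms B.useful_in_nodes by auto
  have hu: "hom_node u \<in> bdd_N R" "hom_node u \<noteq> bdd_term R"
    using hom_node[OF assms(1)] assms(2) B.term_if_layer_last[OF B.useful_in_nodes[OF assms(1)]]
      R.layer_term same_n by auto
  have "lifted_inflow u \<le> (\<Sum>v\<in>fibre (hom_node u). lifted_inflow v)"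
    using member_le_sum[OF u _ finite_fibre] lifted_inflow_nonneg by blast
  also have "\<dots> = outflow (hom_node u)"
    using sum_fibre_lifted_inflow[OF hu(1)] outflow_eq_throughflow[OF hu] by simp
  finally show ?thesis .
qed

lemma outflow_lifted_flow:
  assumes u: "u \<in> bdd_N B" "u \<noteq> bdd_term B"
  shows "(\<Sum>a\<in>out_arcs B u. lifted_flow a) = lifted_inflow u"
proof (cases "useful B u")
  case False
  then have "(\<Sum>a\<in>out_arcs B u. lifted_flow a) = 0"
    unfolding lifted_flow_def useful_arcs_def out_arcs_def by (auto intro: sum.neutral)
  with lifted_inflow_useless[OF u(1) False] show ?thesis by simp
next
  case True
  have "(\<Sum>a\<in>out_arcs B u. lifted_flow a)
      = (\<Sum>a\<in>{a \<in> out_arcs B u. a \<in> useful_arcs}. lifted_inflow u * split_ratio (hom_arc a))"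
    unfolding lifted_flow_def
    by (simp add: sum.inter_filter[OF B.finite_out_arcs, symmetric])
      (rule sum.cong, auto simp: out_arcs_def)
  also have "\<dots> = lifted_inflow u * (\<Sum>a\<in>{a \<in> out_arcs B u. a \<in> useful_arcs}. split_ratio (hom_arc a))"
    by (simp add: sum_distrib_left)
  also have "\<dots> = lifted_inflow u * (\<Sum>a'\<in>out_arcs R (hom_node u). split_ratio a')"
    using sum.reindex_bij_betw[OF bij_betw_hom_arc_out_arcs[OF True], of split_ratio] by simp
  also have "\<dots> = lifted_inflow u"
    using sum_split_ratio[of "hom_node u"] lifted_inflow_le_outflow[OF True u(2)]
      lifted_inflow_nonneg[of u] by auto
  finally show ?thesis .
qed

lemma lifted_flow_le:
  assumes a: "a \<in> useful_arcs"
  shows "lifted_flow a \<le> y (hom_arc a)"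
proof -
  let ?u = "bdd_src B a" and ?a' = "hom_arc a"
  have u: "useful B ?u" using a unfolding useful_arcs_def by simp
  have a': "?a' \<in> bdd_A R" "bdd_src R ?a' = hom_node ?u" using hom_arc[OF a] by auto
  have "bdd_layer B ?u \<le> bdd_n B" using B.src_layer_bounds a unfolding useful_arcs_def by simp
  then have "?u \<noteq> bdd_term B" using B.layer_term by auto
  then have le: "lifted_inflow ?u \<le> outflow (bdd_src R ?a')"
    using lifted_inflow_le_outflow[OF u] a'(2) by simp
  have "lifted_flow a = lifted_inflow ?u * split_ratio ?a'" using a unfolding lifted_flow_def by simp
  also have "\<dots> \<le> outflow (bdd_src R ?a') * split_ratio ?a'"
    using le split_ratio_nonneg[OF a'(1)] by (rule mult_right_mono)
  also have "\<dots> = y ?a'" using split_ratio_mult_outflow[OF a'(1)] by (simp add: mult.commute)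
  finally show ?thesis .
qed

lemma lifted_flow_cap:
  assumes a: "a \<in> bdd_A B"
  shows "lifted_flow a \<le> (if bdd_label B a then x (bdd_layer B (bdd_src B a)) else 1 - x (bdd_layer B (bdd_src B a)))"
proof (cases "a \<in> useful_arcs")
  case True
  have "bdd_layer R (bdd_src R (hom_arc a)) = bdd_layer B (bdd_src B a)"
    using hom_arc[OF True] hom_node True unfolding useful_arcs_def by auto
  then show ?thesis
    using lifted_flow_le[OF True] hom_arc[OF True] flow_cap_one[of "hom_arc a"] flow_cap_zero[of "hom_arc a"]
    by (auto split: if_splits)
next
  case False
  then show ?thesis
    using x_bounds B.src_layer_bounds[OF a] same_n unfolding lifted_flow_def by auto
qed

lemma lifted_flow_in_Fcap: "(x, lifted_flow) \<in> Fcap B"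
proof -
  have "out_arcs R (bdd_root R) \<noteq> {}" using flow_root by auto
  then obtain a' where "a' \<in> bdd_A R" "bdd_src R a' = bdd_root R" unfolding out_arcs_def by auto
  then have "bdd_root R \<noteq> bdd_term R" using R.src_layer_bounds R.layer_root R.layer_term by force
  then have root_term: "bdd_root B \<noteq> bdd_term B" using hom_node_root hom_node_term by auto
  have root_flow: "(\<Sum>a\<in>out_arcs B (bdd_root B). lifted_flow a) = 1"
    using outflow_lifted_flow[OF B.root_in_nodes root_term] B.layer_root
    unfolding lifted_inflow_def by simp
  have "(\<Sum>a\<in>in_arcs B (bdd_term B). lifted_flow a) = lifted_inflow (bdd_term B)"
    using inflow_lifted_flow[OF B.term_in_nodes] root_term by simp
  also have "\<dots> = throughflow (bdd_term R)"
    using sum_fibre_lifted_inflow[OF R.term_in_nodes] fibre_term by simp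
  also have "\<dots> = 1"
    using flow_term \<open>bdd_root R \<noteq> bdd_term R\<close> unfolding throughflow_def by simp
  finally have term_flow: "(\<Sum>a\<in>in_arcs B (bdd_term B). lifted_flow a) = 1" .
  show ?thesis
    unfolding Fcap_def mem_Collect_eq case_prod_conv
  proof (intro conjI ballI impI)
    fix a assume "a \<in> bdd_A B"
    from lifted_flow_cap[OF this]
    show "bdd_label B a \<Longrightarrow> lifted_flow a \<le> x (bdd_layer B (bdd_src B a))"
      and "\<not> bdd_label B a \<Longrightarrow> lifted_flow a \<le> 1 - x (bdd_layer B (bdd_src B a))"
      by simp_all
  qed (use x_bounds same_n lifted_flow_nonneg outflow_lifted_flow inflow_lifted_flow root_flow term_flow
      in auto)
qed

end

theorem theorem4:
  fixes B :: "('v, 'a) bdd" and Br :: "('w, 'b) bdd"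
  assumes "is_bdd B"
    and "is_reduced_bdd Br"
    and "bdd_n Br = bdd_n B"
    and "bdd_X Br = bdd_X B"
  shows "proj_x Br \<subseteq> proj_x B"
proof
  fix x assume "x \<in> proj_x Br"
  then obtain y where flow: "(x, y) \<in> Fcap Br" unfolding proj_x_def by auto
  have Br: "bdd Br" using assms(2) unfolding is_reduced_bdd_def bdd_def by simp
  show "x \<in> proj_x B"
  proof (cases "bdd_X B = {}")
    case True
    with flow bdd.Fcap_empty_if_X_empty[OF Br] assms(4) show ?thesis by simp
  next
    case False
    with assms have "flow_lift B Br x y"
      using Br flow reduced_bdd_useful[OF assms(2)] reduced_bdd_node_eqI[OF assms(2)]
      by unfold_locales (auto simp: bdd_def)
    then show ?thesis unfolding proj_x_def using flow_lift.lifted_flow_in_Fcap by blast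
  qed
qed

end
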